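(* Let $U$ be a finite nonempty set, $R$ an equivalence relation on $U$, and $M(R)$ the support matroid induced by $R$. For every $X\subseteq U$, $X$ is a closed set of $M(R)$ if and only if $R_{*}(X)=X$.
   Context: For $x\in U$, $RN(x)=\{y\in U\mid xRy\}$; $R_{*}(X)=\{x\in U\mid RN(x)\subseteq X\}$ and $R^{*}(X)=\{x\in U\mid RN(x)\cap X\neq\emptyset\}$. Let $\mathbf{S}(R)=\{X\subseteq U\mid R^{*}(X)=U\}$. The support matroid $M(R)=(U,\mathbf{I}(R))$ is the matroid on $U$ whose independent sets $\mathbf{I}(R)$ are the subsets of inclusion-minimal members of $\mathbf{S}(R)$. For a matroid $(U,\mathbf{I})$, the rank is $r(X)=\max\{|I|\mid I\subseteq X, I\in\mathbf{I}\}$, the closure is $cl(X)=\{e\in U\mid r(X)=r(X\cup\{e\})\}$, and $X$ is closed if $cl(X)=X$. *)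

theory Defs
  imports Main
begin

definition RN :: "'a rel \<Rightarrow> 'a \<Rightarrow> 'a set" where
  "RN R x = {y. (x, y) \<in> R}"

definition lower_approx :: "'a set \<Rightarrow> 'a rel \<Rightarrow> 'a set \<Rightarrow> 'a set" where
  "lower_approx U R X = {x \<in> U. RN R x \<subseteq> X}"

definition upper_approx :: "'a set \<Rightarrow> 'a rel \<Rightarrow> 'a set \<Rightarrow> 'a set" where
  "upper_approx U R X = {x \<in> U. RN R x \<inter> X \<noteq> {}}"

definition supp_sets :: "'a set \<Rightarrow> 'a rel \<Rightarrow> 'a set set" where
  "supp_sets U R = {X. X \<subseteq> U \<and> upper_approx U R X = U}"

definition supp_indep :: "'a set \<Rightarrow> 'a rel \<Rightarrow> 'a set set" where
  "supp_indep U R = {I. \<exists>Y. Y \<in> supp_sets U R \<and>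
      (\<forall>Z. Z \<in> supp_sets U R \<and> Z \<subseteq> Y \<longrightarrow> Z = Y) \<and> I \<subseteq> Y}"

definition mrank :: "'a set set \<Rightarrow> 'a set \<Rightarrow> nat" where
  "mrank Ind X = Max {card I | I. I \<subseteq> X \<and> I \<in> Ind}"

definition mclosure :: "'a set \<Rightarrow> 'a set set \<Rightarrow> 'a set \<Rightarrow> 'a set" where
  "mclosure U Ind X = {e \<in> U. mrank Ind X = mrank Ind (X \<union> {e})}"

definition mclosed :: "'a set \<Rightarrow> 'a set set \<Rightarrow> 'a set \<Rightarrow> bool" where
  "mclosed U Ind X \<longleftrightarrow> mclosure U Ind X = X"

end

theory Submission
  imports Defs
begin

text \<open>For an equivalence relation R the minimal members of S(R) are exactly the transversals
  of U/R, so the independent sets of M(R) are the sets meeting every class at most once, i.e.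
  the sets on which x \<mapsto> R``{x} is injective: M(R) is the partition matroid of U/R. Its rank
  function counts the classes met by X, hence the closure of X is the union R``X of these
  classes. Finally R``X = X says that X is a union of classes, which is the same as saying
  that X equals its lower approximation.\<close>

lemma supp_sets_iff:
  "X \<in> supp_sets U R \<longleftrightarrow> X \<subseteq> U \<and> (\<forall>u\<in>U. \<exists>x\<in>X. (u, x) \<in> R)"
  by (auto simp: supp_sets_def upper_approx_def RN_def)

lemma inj_on_equiv_class_iff:
  assumes "equiv U R" and "Y \<subseteq> U"
  shows "inj_on (\<lambda>x. R``{x}) Y \<longleftrightarrow> (\<forall>x\<in>Y. \<forall>y\<in>Y. (x, y) \<in> R \<longrightarrow> x = y)"
  using assms by (auto simp: inj_on_def eq_equiv_class_iff subset_iff)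

lemma minimal_supp_set_inj_on_equiv_class:
  assumes eq: "equiv U R" and Y: "Y \<in> supp_sets U R"
    and min: "\<And>Z. Z \<in> supp_sets U R \<Longrightarrow> Z \<subseteq> Y \<Longrightarrow> Z = Y"
  shows "inj_on (\<lambda>x. R``{x}) Y"
proof -
  have YU: "Y \<subseteq> U" and cover: "\<forall>u\<in>U. \<exists>y\<in>Y. (u, y) \<in> R"
    using Y by (auto simp: supp_sets_iff)
  have "x = y" if "x \<in> Y" "y \<in> Y" "(x, y) \<in> R" for x y
  proof (rule ccontr)
    assume "x \<noteq> y"
    have "\<exists>z\<in>Y - {y}. (u, z) \<in> R" if "u \<in> U" for u
    proof -
      obtain z where "z \<in> Y" "(u, z) \<in> R" using cover \<open>u \<in> U\<close> by blast
      moreover have "(u, x) \<in> R" if "z = y"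
        using \<open>(u, z) \<in> R\<close> \<open>(x, y) \<in> R\<close> that eq
        unfolding equiv_def sym_def trans_def by blast
      ultimately show ?thesis using \<open>x \<in> Y\<close> \<open>x \<noteq> y\<close> by (cases "z = y") auto
    qed
    then have "Y - {y} \<in> supp_sets U R" using YU by (auto simp: supp_sets_iff)
    then show False using min \<open>y \<in> Y\<close> by blast
  qed
  then show ?thesis using inj_on_equiv_class_iff[OF eq YU] by blast
qed

lemma inj_on_equiv_class_supp_set_minimal:
  assumes eq: "equiv U R" and Y: "Y \<in> supp_sets U R" and inj: "inj_on (\<lambda>x. R``{x}) Y"
    and Z: "Z \<in> supp_sets U R" and "Z \<subseteq> Y"
  shows "Z = Y"
proof
  have YU: "Y \<subseteq> U" using Y by (simp add: supp_sets_iff)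
  show "Y \<subseteq> Z"
  proof
    fix y assume "y \<in> Y"
    then have "y \<in> U" using YU by blast
    then obtain z where "z \<in> Z" "(y, z) \<in> R" using Z by (auto simp: supp_sets_iff)
    then show "y \<in> Z"
      using inj_on_equiv_class_iff[OF eq YU] inj \<open>y \<in> Y\<close> \<open>Z \<subseteq> Y\<close> by blast
  qed
qed fact

lemma inj_on_equiv_class_extends_to_supp_set:
  assumes eq: "equiv U R" and IU: "I \<subseteq> U" and inj: "inj_on (\<lambda>x. R``{x}) I"
  obtains Y where "Y \<in> supp_sets U R" "I \<subseteq> Y" "inj_on (\<lambda>x. R``{x}) Y"
proof -
  let ?cls = "\<lambda>x. R``{x}"
  txt \<open>Add one representative of every class that I misses.\<close>
  obtain B where B: "B \<subseteq> U - R``I" "inj_on ?cls B" "?cls ` (U - R``I) = ?cls ` B"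
    using subset_image_inj[where f = ?cls and T = "U - R``I", THEN iffD1, OF subset_refl] by auto
  have "?cls ` (I - B) \<inter> ?cls ` (B - I) = {}"
  proof -
    have "R``{a} \<noteq> R``{b}" if "a \<in> I" "b \<in> B" for a b
    proof
      assume "R``{a} = R``{b}"
      moreover have "b \<in> R``{b}"
        using B(1) \<open>b \<in> B\<close> by (intro equiv_class_self[OF eq]) blast
      ultimately show False using B(1) \<open>a \<in> I\<close> \<open>b \<in> B\<close> by blast
    qed
    then show ?thesis by blast
  qed
  then have "inj_on ?cls (I \<union> B)" using inj B(2) by (simp add: inj_on_Un)
  moreover have "\<exists>y\<in>I \<union> B. (u, y) \<in> R" if "u \<in> U" for u
  proof (cases "u \<in> R``I")
    case True
    then obtain a where "a \<in> I" "(a, u) \<in> R" by blast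
    then show ?thesis using eq by (blast elim: equivE dest: symD)
  next
    case False
    then have "R``{u} \<in> ?cls ` B" using B(3) \<open>u \<in> U\<close> by (metis DiffI imageI)
    then obtain b where "b \<in> B" "R``{u} = R``{b}" by blast
    moreover have "b \<in> U" using B(1) \<open>b \<in> B\<close> by blast
    ultimately show ?thesis using eq_equiv_class_iff[OF eq \<open>u \<in> U\<close>] by blast
  qed
  then have "I \<union> B \<in> supp_sets U R" using IU B(1) by (auto simp: supp_sets_iff)
  ultimately show thesis using that by blast
qed

lemma supp_indep_eq:
  assumes "equiv U R"
  shows "supp_indep U R = {I. I \<subseteq> U \<and> inj_on (\<lambda>x. R``{x}) I}"
proof (intro set_eqI iffI; simp)
  fix I assume "I \<in> supp_indep U R"
  then obtain Y where Y: "Y \<in> supp_sets U R" "I \<subseteq> Y"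
    and min: "\<And>Z. Z \<in> supp_sets U R \<Longrightarrow> Z \<subseteq> Y \<Longrightarrow> Z = Y"
    unfolding supp_indep_def by blast
  have "inj_on (\<lambda>x. R``{x}) Y" using minimal_supp_set_inj_on_equiv_class assms Y(1) min by blast
  then show "I \<subseteq> U \<and> inj_on (\<lambda>x. R``{x}) I"
    using Y by (auto simp: supp_sets_iff intro: inj_on_subset)
next
  fix I assume "I \<subseteq> U \<and> inj_on (\<lambda>x. R``{x}) I"
  then obtain Y where "Y \<in> supp_sets U R" "I \<subseteq> Y" "inj_on (\<lambda>x. R``{x}) Y"
    using inj_on_equiv_class_extends_to_supp_set assms by blast
  then show "I \<in> supp_indep U R"
    unfolding supp_indep_def using inj_on_equiv_class_supp_set_minimal assms by blast
qed

lemma mrank_inj_on_sets: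
  assumes "finite X" and "X \<subseteq> U"
  shows "mrank {I. I \<subseteq> U \<and> inj_on f I} X = card (f ` X)"
  unfolding mrank_def
proof (rule Max_eqI)
  show "finite {card I |I. I \<subseteq> X \<and> I \<in> {I. I \<subseteq> U \<and> inj_on f I}}"
    using assms(1) by simp
  show "s \<le> card (f ` X)" if "s \<in> {card I |I. I \<subseteq> X \<and> I \<in> {I. I \<subseteq> U \<and> inj_on f I}}" for s
    using that assms(1) by (auto intro!: card_inj_on_le[where f = f])
  obtain B where "B \<subseteq> X" "inj_on f B" "f ` X = f ` B"
    using subset_image_inj[of "f ` X" f X] by blast
  then show "card (f ` X) \<in> {card I |I. I \<subseteq> X \<and> I \<in> {I. I \<subseteq> U \<and> inj_on f I}}"
    using assms(2) by (auto simp: card_image)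
qed
lemma mclosure_inj_on_sets:
  assumes "finite U" and "X \<subseteq> U"
  shows "mclosure U {I. I \<subseteq> U \<and> inj_on f I} X = {e \<in> U. f e \<in> f ` X}"
proof -
  have fin: "finite X" using assms finite_subset by blast
  have "mrank {I. I \<subseteq> U \<and> inj_on f I} X = mrank {I. I \<subseteq> U \<and> inj_on f I} (X \<union> {e})
      \<longleftrightarrow> f e \<in> f ` X" if "e \<in> U" for e
    using that assms fin by (simp add: mrank_inj_on_sets card_insert_if)
  then show ?thesis unfolding mclosure_def by blast
qed

lemma Image_equiv_eq:
  assumes "equiv U R" and "X \<subseteq> U"
  shows "R``X = {e \<in> U. R``{e} \<in> (\<lambda>x. R``{x}) ` X}"
  using assms(2) by (auto simp: equiv_class_eq_iff[OF assms(1)] subset_iff) (metis image_eqI)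

lemma lower_approx_eq_iff_Image_eq:
  assumes "equiv U R" and "X \<subseteq> U"
  shows "lower_approx U R X = X \<longleftrightarrow> R``X = X"
proof -
  have refl: "(x, x) \<in> R" if "x \<in> U" for x
    using assms(1) that by (blast elim: equivE dest: refl_onD)
  have "lower_approx U R X = {x \<in> U. R``{x} \<subseteq> X}"
    by (auto simp: lower_approx_def RN_def)
  then show ?thesis using assms(2) refl by blast
qed

theorem corollary2:
  fixes U :: "'a set" and R :: "'a rel" and X :: "'a set"
  assumes "finite U" and "U \<noteq> {}" and "equiv U R" and "X \<subseteq> U"
  shows "mclosed U (supp_indep U R) X \<longleftrightarrow> lower_approx U R X = X"
proof -
  have "mclosure U (supp_indep U R) X = R``X"
    using assms(1,3,4) by (simp add: supp_indep_eq mclosure_inj_on_sets Image_equiv_eq)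
  then show ?thesis
    using assms(3,4) by (simp add: mclosed_def lower_approx_eq_iff_Image_eq)
qed

end
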